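(* Let $G$ and $H$ be groups, $\Psi\colon G\to\operatorname{Aut}H$ a group homomorphism (written $g\mapsto\Psi_g$), and let $B\colon H\to G$ be a relative Rota--Baxter operator on $H$ with respect to $(G,\Psi)$. Let $H\rtimes_\Psi G$ be the semi-direct product. Then the map $$B'\colon H\rtimes_\Psi G\to H\rtimes_\Psi G,\qquad B'((h,a))=(e,\,a^{-1}B(h)),\quad h\in H,\ a\in G,$$ is a Rota--Baxter operator (of weight $1$) on $H\rtimes_\Psi G$.
   Context: A relative Rota--Baxter operator on $H$ with respect to $(G,\Psi)$ is a map $B\colon H\to G$ with $B(h)B(k)=B(h\Psi_{B(h)}(k))$ for all $h,k\in H$. The semi-direct product $H\rtimes_\Psi G$ is the set $H\times G$ with multiplication $(h,a)(k,b)=(h\Psi_a(k),ab)$; $e$ denotes the identity of $H$. A Rota--Baxter operator (of weight $1$) on a group $K$ is a map $R\colon K\to K$ with $R(u)R(v)=R(uR(u)vR(u)^{-1})$ for all $u,v\in K$. *)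

theory Defs
  imports "HOL-Algebra.Algebra"
begin

definition relative_RB ::
  "('g, 'm) monoid_scheme \<Rightarrow> ('h, 'n) monoid_scheme \<Rightarrow> ('g \<Rightarrow> 'h \<Rightarrow> 'h) \<Rightarrow> ('h \<Rightarrow> 'g) \<Rightarrow> bool"
  where "relative_RB G H Psi B \<longleftrightarrow>
     B \<in> carrier H \<rightarrow> carrier G \<and>
     (\<forall>h\<in>carrier H. \<forall>k\<in>carrier H.
        B h \<otimes>\<^bsub>G\<^esub> B k = B (h \<otimes>\<^bsub>H\<^esub> Psi (B h) k))"

definition semidirect ::
  "('h, 'n) monoid_scheme \<Rightarrow> ('g, 'm) monoid_scheme \<Rightarrow> ('g \<Rightarrow> 'h \<Rightarrow> 'h) \<Rightarrow> ('h \<times> 'g) monoid"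
  where "semidirect H G Psi =
     \<lparr>carrier = carrier H \<times> carrier G,
      monoid.mult = (\<lambda>(h, a) (k, b). (h \<otimes>\<^bsub>H\<^esub> Psi a k, a \<otimes>\<^bsub>G\<^esub> b)),
      one = (\<one>\<^bsub>H\<^esub>, \<one>\<^bsub>G\<^esub>)\<rparr>"

definition RB_operator :: "('k, 'n) monoid_scheme \<Rightarrow> ('k \<Rightarrow> 'k) \<Rightarrow> bool"
  where "RB_operator K R \<longleftrightarrow>
     R \<in> carrier K \<rightarrow> carrier K \<and>
     (\<forall>u\<in>carrier K. \<forall>v\<in>carrier K.
        R u \<otimes>\<^bsub>K\<^esub> R v =
        R (u \<otimes>\<^bsub>K\<^esub> R u \<otimes>\<^bsub>K\<^esub> v \<otimes>\<^bsub>K\<^esub> inv\<^bsub>K\<^esub> (R u)))"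

end

(* Write R for B' and, for u = (h, a), put c = a^-1 B(h). Then u R(u) = (h, B(h)),
   so for v = (k, b) we get u R(u) v R(u)^-1 = (h Psi_B(h)(k), B(h) b c^-1). The
   relative Rota--Baxter identity rewrites B(h Psi_B(h)(k)) as B(h) B(k), and the
   B(h) cancels, leaving (e, c b^-1 B(k)) = R(u) R(v). *)

theory Submission
  imports Defs
begin

locale automorphism_action = G: group G + H: group H
  for G :: "('g, 'm) monoid_scheme" and H :: "('h, 'n) monoid_scheme" +
  fixes Psi :: "'g \<Rightarrow> 'h \<Rightarrow> 'h"
  assumes Psi_hom: "Psi \<in> hom G (AutoGroup H)"
begin

lemma Psi_auto: "a \<in> carrier G \<Longrightarrow> Psi a \<in> auto H"
  using Psi_hom by (auto simp: hom_def AutoGroup_def)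

lemma Psi_hom_H: "a \<in> carrier G \<Longrightarrow> Psi a \<in> hom H H"
  using Psi_auto by (simp add: auto_def)

lemma Psi_closed [simp]: "a \<in> carrier G \<Longrightarrow> x \<in> carrier H \<Longrightarrow> Psi a x \<in> carrier H"
  using Psi_hom_H by (auto simp: hom_def)

lemma Psi_mult [simp]:
  "a \<in> carrier G \<Longrightarrow> x \<in> carrier H \<Longrightarrow> y \<in> carrier H \<Longrightarrow>
    Psi a (x \<otimes>\<^bsub>H\<^esub> y) = Psi a x \<otimes>\<^bsub>H\<^esub> Psi a y"
  using Psi_hom_H by (simp add: hom_mult)

lemma Psi_one [simp]: "a \<in> carrier G \<Longrightarrow> Psi a \<one>\<^bsub>H\<^esub> = \<one>\<^bsub>H\<^esub>"
  using Psi_hom_H H.group_axioms by (simp add: group_hom.hom_one group_hom_axioms.intro group_hom_def)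

lemma Psi_compose:
  assumes "a \<in> carrier G" "b \<in> carrier G" "x \<in> carrier H"
  shows "Psi (a \<otimes>\<^bsub>G\<^esub> b) x = Psi a (Psi b x)"
proof -
  have "Psi (a \<otimes>\<^bsub>G\<^esub> b) = compose (carrier H) (Psi a) (Psi b)"
    using Psi_hom assms Psi_auto by (simp add: hom_mult AutoGroup_def BijGroup_def auto_def)
  with assms show ?thesis by (simp add: compose_def)
qed

lemma Psi_one_apply [simp]: "x \<in> carrier H \<Longrightarrow> Psi \<one>\<^bsub>G\<^esub> x = x"
proof -
  have "group_hom G (AutoGroup H) Psi"
    using Psi_hom H.AutoGroup by (simp add: group_hom_def group_hom_axioms_def G.group_axioms)
  then have "Psi \<one>\<^bsub>G\<^esub> = (\<lambda>x \<in> carrier H. x)"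
    by (simp add: group_hom.hom_one AutoGroup_def BijGroup_def)
  then show "x \<in> carrier H \<Longrightarrow> Psi \<one>\<^bsub>G\<^esub> x = x" by simp
qed

abbreviation SD where "SD \<equiv> semidirect H G Psi"

lemma carrier_semidirect [simp]: "carrier SD = carrier H \<times> carrier G"
  by (simp add: semidirect_def)

lemma one_semidirect [simp]: "\<one>\<^bsub>SD\<^esub> = (\<one>\<^bsub>H\<^esub>, \<one>\<^bsub>G\<^esub>)"
  by (simp add: semidirect_def)

lemma mult_semidirect [simp]:
  "(h, a) \<otimes>\<^bsub>SD\<^esub> (k, b) = (h \<otimes>\<^bsub>H\<^esub> Psi a k, a \<otimes>\<^bsub>G\<^esub> b)"
  by (simp add: semidirect_def)

lemma semidirect_l_inv:
  assumes "h \<in> carrier H" "a \<in> carrier G"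
  shows "(Psi (inv\<^bsub>G\<^esub> a) (inv\<^bsub>H\<^esub> h), inv\<^bsub>G\<^esub> a) \<otimes>\<^bsub>SD\<^esub> (h, a) = \<one>\<^bsub>SD\<^esub>"
  using assms by (simp flip: Psi_mult)

lemma group_semidirect: "group SD"
proof (rule groupI)
  fix u v w assume "u \<in> carrier SD" "v \<in> carrier SD" "w \<in> carrier SD"
  then show "u \<otimes>\<^bsub>SD\<^esub> v \<otimes>\<^bsub>SD\<^esub> w = u \<otimes>\<^bsub>SD\<^esub> (v \<otimes>\<^bsub>SD\<^esub> w)"
    by (auto simp: Psi_compose H.m_assoc G.m_assoc)
next
  fix u assume "u \<in> carrier SD"
  then show "\<exists>v \<in> carrier SD. v \<otimes>\<^bsub>SD\<^esub> u = \<one>\<^bsub>SD\<^esub>"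
    using semidirect_l_inv by (cases u) (fastforce simp del: mult_semidirect one_semidirect)
qed auto

lemma inv_semidirect:
  assumes "h \<in> carrier H" "a \<in> carrier G"
  shows "inv\<^bsub>SD\<^esub> (h, a) = (Psi (inv\<^bsub>G\<^esub> a) (inv\<^bsub>H\<^esub> h), inv\<^bsub>G\<^esub> a)"
  using group.inv_equality[OF group_semidirect semidirect_l_inv[OF assms]] assms by simp

lemma RB_operator_semidirect:
  assumes B: "relative_RB G H Psi B"
  shows "RB_operator SD (\<lambda>(h, a). (\<one>\<^bsub>H\<^esub>, inv\<^bsub>G\<^esub> a \<otimes>\<^bsub>G\<^esub> B h))"
    (is "RB_operator SD ?R")
proof -
  have B_closed: "B h \<in> carrier G" if "h \<in> carrier H" for h
    using B that by (auto simp: relative_RB_def)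
  have B_mult: "B h \<otimes>\<^bsub>G\<^esub> B k = B (h \<otimes>\<^bsub>H\<^esub> Psi (B h) k)"
    if "h \<in> carrier H" "k \<in> carrier H" for h k
    using B that by (auto simp: relative_RB_def)
  show ?thesis
    unfolding RB_operator_def
  proof (intro conjI ballI)
    show "?R \<in> carrier SD \<rightarrow> carrier SD"
      using B_closed by auto
  next
    fix u v assume "u \<in> carrier SD" "v \<in> carrier SD"
    then obtain h a k b where u: "u = (h, a)" and v: "v = (k, b)"
      and h: "h \<in> carrier H" and a: "a \<in> carrier G"
      and k: "k \<in> carrier H" and b: "b \<in> carrier G"
      by auto
    define c where "c = inv\<^bsub>G\<^esub> a \<otimes>\<^bsub>G\<^esub> B h"
    have c: "c \<in> carrier G"
      using a h B_closed by (simp add: c_def)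
    have Ru: "?R u = (\<one>\<^bsub>H\<^esub>, c)"
      by (simp add: u c_def)
    have "u \<otimes>\<^bsub>SD\<^esub> ?R u = (h, B h)"
      using a h B_closed by (simp add: Ru u c_def G.m_assoc [symmetric])
    then have "u \<otimes>\<^bsub>SD\<^esub> ?R u \<otimes>\<^bsub>SD\<^esub> v \<otimes>\<^bsub>SD\<^esub> inv\<^bsub>SD\<^esub> (?R u)
        = (h \<otimes>\<^bsub>H\<^esub> Psi (B h) k, B h \<otimes>\<^bsub>G\<^esub> b \<otimes>\<^bsub>G\<^esub> inv\<^bsub>G\<^esub> c)"
      using h k b c B_closed by (simp add: Ru v inv_semidirect)
    then have "?R (u \<otimes>\<^bsub>SD\<^esub> ?R u \<otimes>\<^bsub>SD\<^esub> v \<otimes>\<^bsub>SD\<^esub> inv\<^bsub>SD\<^esub> (?R u))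
        = (\<one>\<^bsub>H\<^esub>, inv\<^bsub>G\<^esub> (B h \<otimes>\<^bsub>G\<^esub> b \<otimes>\<^bsub>G\<^esub> inv\<^bsub>G\<^esub> c) \<otimes>\<^bsub>G\<^esub> (B h \<otimes>\<^bsub>G\<^esub> B k))"
      by (simp add: B_mult h k)
    also have "\<dots> = (\<one>\<^bsub>H\<^esub>, c \<otimes>\<^bsub>G\<^esub> (inv\<^bsub>G\<^esub> b \<otimes>\<^bsub>G\<^esub> B k))"
      using B_closed h k b c
      by (simp add: G.inv_mult_group G.m_assoc flip: G.m_assoc [of "inv\<^bsub>G\<^esub> B h" "B h"])
    also have "\<dots> = ?R u \<otimes>\<^bsub>SD\<^esub> ?R v"
      using c by (simp add: Ru v)
    finally show "?R u \<otimes>\<^bsub>SD\<^esub> ?R v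
        = ?R (u \<otimes>\<^bsub>SD\<^esub> ?R u \<otimes>\<^bsub>SD\<^esub> v \<otimes>\<^bsub>SD\<^esub> inv\<^bsub>SD\<^esub> (?R u))" ..
  qed
qed

end

theorem proposition3p1:
  fixes G :: "('g, 'm) monoid_scheme" and H :: "('h, 'n) monoid_scheme"
    and Psi :: "'g \<Rightarrow> 'h \<Rightarrow> 'h" and B :: "'h \<Rightarrow> 'g"
  assumes "group G" and "group H"
    and "Psi \<in> hom G (AutoGroup H)"
    and "relative_RB G H Psi B"
  shows "RB_operator (semidirect H G Psi)
           (\<lambda>(h, a). (\<one>\<^bsub>H\<^esub>, inv\<^bsub>G\<^esub> a \<otimes>\<^bsub>G\<^esub> B h))"
proof -
  interpret automorphism_action G H Psi
    using assms(1-3) by (simp add: automorphism_action_def automorphism_action_axioms_def)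
  show ?thesis
    using assms(4) by (rule RB_operator_semidirect)
qed

end
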